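(* Let $X$ be a connected, locally connected, Hausdorff, normal, first countable topological space, $V$ a locally convex topological vector space, and $f:X\to V$ a continuous closed map that has local convexity data and is locally fiber connected. Then (i) the projection $\pi_f:X\to X_f$ is a closed map; (ii) the quotient $X_f$ is a Hausdorff space.
   Context: A subset $C\subset V$ is a cone with vertex $v_0$ if $v_0\in C$ and $(1-\lambda)v_0+\lambda v\in C$ for every $\lambda\ge 0$ and every $v\in C$, $v\ne v_0$; it is a convex cone if it is moreover convex. A continuous map $f:X\to V$ has local convexity data if for each $x\in X$ and every sufficiently small open neighborhood $U_x$ of $x$ there is a convex cone $C_x\subset V$ with vertex $f(x)$, endowed with the subspace topology from $V$, such that (VN) $f(U_x)\subset C_x$ and $f(U_x)$ is a neighborhood of $f(x)$ in $C_x$; and (SLO) $f|_{U_x}:U_x\to C_x$ is an open map, and for every neighborhood $U'_x\subset U_x$ of $x$ the set $f(U'_x)$ is a neighborhood of $f(x)$ in $C_x$. A subset $A\subset X$ satisfies condition (LFC) if for every $a\in A$, the set $A$ does not intersect two different connected components of the fiber $f^{-1}(f(a))$. The map $f$ is locally fiber connected if for every $x\in X$, every open neighborhood of $x$ contains a neighborhood $U_x$ of $x$ satisfying (LFC). Declare $x\sim y$ in $X$ iff $f(x)=f(y)$ and $x,y$ lie in the same connected component of $f^{-1}(f(x))$; $X_f:=X/\!\sim$ with the quotient topology, $\pi_f:X\to X_f$ is the projection and $\tilde f:X_f\to V$ is the unique map with $\tilde f\circ\pi_f=f$. *)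

theory Defs
  imports "HOL-Analysis.Analysis"
begin

definition locally_convex_tvs :: "'v::real_vector topology \<Rightarrow> bool" where
  "locally_convex_tvs T \<longleftrightarrow>
     topspace T = UNIV \<and>
     continuous_map (prod_topology T T) T (\<lambda>(u,v). u + v) \<and>
     continuous_map (prod_topology euclideanreal T) T (\<lambda>(c,v). c *\<^sub>R v) \<and>
     Hausdorff_space T \<and>
     (\<forall>U v. openin T U \<and> v \<in> U \<longrightarrow> (\<exists>W. openin T W \<and> convex W \<and> v \<in> W \<and> W \<subseteq> U))"

definition nbhd_in :: "'a topology \<Rightarrow> 'a set \<Rightarrow> 'a \<Rightarrow> bool" where
  "nbhd_in X S x \<longleftrightarrow> S \<subseteq> topspace X \<and> (\<exists>U. openin X U \<and> x \<in> U \<and> U \<subseteq> S)"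

definition is_cone :: "'v::real_vector set \<Rightarrow> 'v \<Rightarrow> bool" where
  "is_cone C v0 \<longleftrightarrow> v0 \<in> C \<and>
     (\<forall>v\<in>C. v \<noteq> v0 \<longrightarrow> (\<forall>l::real. l \<ge> 0 \<longrightarrow> (1 - l) *\<^sub>R v0 + l *\<^sub>R v \<in> C))"

definition is_convex_cone :: "'v::real_vector set \<Rightarrow> 'v \<Rightarrow> bool" where
  "is_convex_cone C v0 \<longleftrightarrow> is_cone C v0 \<and> convex C"

text \<open>Local convexity data: for every x and every sufficiently small open neighborhood U of x
  (i.e. every open U with x in U contained in some fixed open neighborhood W of x) there is a convex
  cone C with vertex f x satisfying (VN) and (SLO).\<close>
definition local_convexity_data :: "'a topology \<Rightarrow> 'v::real_vector topology \<Rightarrow> ('a \<Rightarrow> 'v) \<Rightarrow> bool" where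
  "local_convexity_data X T f \<longleftrightarrow>
     (\<forall>x\<in>topspace X. \<exists>W. openin X W \<and> x \<in> W \<and>
        (\<forall>U. openin X U \<and> x \<in> U \<and> U \<subseteq> W \<longrightarrow>
           (\<exists>C. is_convex_cone C (f x) \<and>
                f ` U \<subseteq> C \<and> nbhd_in (subtopology T C) (f ` U) (f x) \<and>
                open_map (subtopology X U) (subtopology T C) f \<and>
                (\<forall>U'. nbhd_in X U' x \<and> U' \<subseteq> U \<longrightarrow> nbhd_in (subtopology T C) (f ` U') (f x)))))"

definition fiber :: "'a topology \<Rightarrow> ('a \<Rightarrow> 'v) \<Rightarrow> 'a \<Rightarrow> 'a set" where
  "fiber X f a = {y \<in> topspace X. f y = f a}"

definition LFC :: "'a topology \<Rightarrow> ('a \<Rightarrow> 'v) \<Rightarrow> 'a set \<Rightarrow> bool" where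
  "LFC X f A \<longleftrightarrow>
     (\<forall>a\<in>A. \<not> (\<exists>K1 K2. K1 \<in> connected_components_of (subtopology X (fiber X f a)) \<and>
                        K2 \<in> connected_components_of (subtopology X (fiber X f a)) \<and>
                        K1 \<noteq> K2 \<and> A \<inter> K1 \<noteq> {} \<and> A \<inter> K2 \<noteq> {}))"

definition locally_fiber_connected :: "'a topology \<Rightarrow> ('a \<Rightarrow> 'v) \<Rightarrow> bool" where
  "locally_fiber_connected X f \<longleftrightarrow>
     (\<forall>x\<in>topspace X. \<forall>N. openin X N \<and> x \<in> N \<longrightarrow>
        (\<exists>U. nbhd_in X U x \<and> U \<subseteq> N \<and> LFC X f U))"

definition fib_rel :: "'a topology \<Rightarrow> ('a \<Rightarrow> 'v) \<Rightarrow> 'a \<Rightarrow> 'a \<Rightarrow> bool" where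
  "fib_rel X f x y \<longleftrightarrow> f x = f y \<and> connected_component_of (subtopology X (fiber X f x)) x y"

definition proj_f :: "'a topology \<Rightarrow> ('a \<Rightarrow> 'v) \<Rightarrow> 'a \<Rightarrow> 'a set" where
  "proj_f X f x = {y. fib_rel X f x y}"

definition quot_f :: "'a topology \<Rightarrow> ('a \<Rightarrow> 'v) \<Rightarrow> 'a set topology" where
  "quot_f X f = topology (\<lambda>S. S \<subseteq> proj_f X f ` topspace X \<and> openin X (\<Union>S))"

end

(* The classes of ~ are the connected components of the closed fibres, and (LFC) makes each of
   them open in its fibre. So if the class K of x misses a closed set A, then K and A \<union> (F - K),
   F the fibre of x, are disjoint closed sets; normality separates them by open sets U and W,
   and since f is closed the cover U \<union> W of F contains a tube f^-1(N) around F. A class meeting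
   U \<inter> f^-1(N) is connected, lies in U \<union> W and meets U, so it lies in U and misses A.
   Hence saturations of closed sets are closed, i.e. \<pi>_f is a closed map, and as a closed
   continuous surjection it maps the normal Hausdorff space X onto a Hausdorff space. *)

theory Submission
  imports Defs
begin

lemma quotient_map_final_topology:
  "quotient_map X (topology (\<lambda>S. S \<subseteq> p ` topspace X \<and> openin X {x \<in> topspace X. p x \<in> S})) p"
proof -
  let ?Q = "topology (\<lambda>S. S \<subseteq> p ` topspace X \<and> openin X {x \<in> topspace X. p x \<in> S})"
  have "istopology (\<lambda>S. S \<subseteq> p ` topspace X \<and> openin X {x \<in> topspace X. p x \<in> S})"
  proof -
    have "{x \<in> topspace X. p x \<in> S \<inter> S'} = {x \<in> topspace X. p x \<in> S} \<inter> {x \<in> topspace X. p x \<in> S'}"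
      for S S' by blast
    moreover have "{x \<in> topspace X. p x \<in> \<Union>K} = (\<Union>S\<in>K. {x \<in> topspace X. p x \<in> S})" for K
      by blast
    ultimately show ?thesis
      unfolding istopology_def by auto
  qed
  then have openin_Q: "openin ?Q S \<longleftrightarrow> S \<subseteq> p ` topspace X \<and> openin X {x \<in> topspace X. p x \<in> S}"
    for S by simp
  have "topspace ?Q = p ` topspace X"
  proof
    show "topspace ?Q \<subseteq> p ` topspace X"
      using openin_Q openin_topspace by blast
    have "{x \<in> topspace X. p x \<in> p ` topspace X} = topspace X"
      by blast
    then have "openin ?Q (p ` topspace X)"
      unfolding openin_Q by simp
    then show "p ` topspace X \<subseteq> topspace ?Q"
      by (rule openin_subset)
  qed
  then show ?thesis
    unfolding quotient_map_def using openin_Q by auto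
qed

lemma proj_f_eq_connected_component:
  "proj_f X f x = connected_component_of_set (subtopology X (fiber X f x)) x"
  unfolding proj_f_def fib_rel_def
  by (auto dest: connected_component_in_topspace simp: fiber_def)

lemma proj_f_subset_fiber: "proj_f X f x \<subseteq> fiber X f x"
  unfolding proj_f_eq_connected_component by (auto dest: connected_component_in_topspace)

lemma fiber_subset_topspace: "fiber X f x \<subseteq> topspace X"
  by (auto simp: fiber_def)

lemma proj_f_subset_topspace: "proj_f X f x \<subseteq> topspace X"
  using proj_f_subset_fiber fiber_subset_topspace by (rule order_trans)

lemma mem_proj_f_self: "x \<in> topspace X \<Longrightarrow> x \<in> proj_f X f x"
  unfolding proj_f_eq_connected_component by (simp add: connected_component_of_refl fiber_def)

lemma proj_f_eq_of_mem:
  assumes "y \<in> proj_f X f x"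
  shows "proj_f X f y = proj_f X f x"
proof -
  have same_fiber: "fiber X f y = fiber X f x"
    using assms proj_f_subset_fiber by (fastforce simp: fiber_def)
  from assms have "connected_component_of (subtopology X (fiber X f x)) x y"
    unfolding proj_f_eq_connected_component by simp
  then have "connected_component_of (subtopology X (fiber X f x)) x =
             connected_component_of (subtopology X (fiber X f x)) y"
    using connected_component_of_equiv by metis
  then show ?thesis
    unfolding proj_f_eq_connected_component same_fiber by simp
qed

lemma Union_proj_f_classes:
  assumes "S \<subseteq> proj_f X f ` topspace X"
  shows "\<Union>S = {x \<in> topspace X. proj_f X f x \<in> S}"
proof
  show "\<Union>S \<subseteq> {x \<in> topspace X. proj_f X f x \<in> S}"
  proof
    fix z assume "z \<in> \<Union>S"
    then obtain x where "z \<in> proj_f X f x" "proj_f X f x \<in> S"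
      using assms by blast
    then show "z \<in> {x \<in> topspace X. proj_f X f x \<in> S}"
      using proj_f_subset_topspace proj_f_eq_of_mem by fastforce
  qed
  show "{x \<in> topspace X. proj_f X f x \<in> S} \<subseteq> \<Union>S"
    using mem_proj_f_self by fast
qed

lemma quotient_map_proj_f: "quotient_map X (quot_f X f) (proj_f X f)"
proof -
  have "quot_f X f =
    topology (\<lambda>S. S \<subseteq> proj_f X f ` topspace X \<and> openin X {x \<in> topspace X. proj_f X f x \<in> S})"
    unfolding quot_f_def
    by (intro arg_cong[where f = topology] ext conj_cong refl) (simp add: Union_proj_f_classes)
  then show ?thesis
    by (simp add: quotient_map_final_topology)
qed

lemma connectedin_proj_f: "connectedin X (proj_f X f x)"
  unfolding proj_f_eq_connected_component
  using connectedin_connected_component_of connectedin_subtopology by metis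

lemma closedin_fiber:
  assumes "continuous_map X T f" and "t1_space T" and "x \<in> topspace X"
  shows "closedin X (fiber X f x)"
proof -
  have "f x \<in> topspace T"
    using assms(1,3) by (auto simp: continuous_map_def Pi_iff)
  then have "closedin X {y \<in> topspace X. f y \<in> {f x}}"
    by (rule closedin_continuous_map_preimage[OF assms(1) closedin_t1_singleton[OF assms(2)]])
  then show ?thesis
    by (simp add: fiber_def)
qed

lemma closedin_proj_f:
  assumes "continuous_map X T f" and "t1_space T" and "x \<in> topspace X"
  shows "closedin X (proj_f X f x)"
proof -
  have "closedin (subtopology X (fiber X f x)) (proj_f X f x)"
    unfolding proj_f_eq_connected_component by (rule closedin_connected_component_of)
  then show ?thesis
    using closedin_closed_subtopology[OF closedin_fiber[OF assms]] by blast
qed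

lemma openin_proj_f_in_fiber:
  assumes "locally_fiber_connected X f"
  shows "openin (subtopology X (fiber X f x)) (proj_f X f x)"
proof (subst openin_subopen, intro ballI)
  fix y assume y: "y \<in> proj_f X f x"
  have y_top: "y \<in> topspace X"
    using proj_f_subset_topspace y by (rule subsetD)
  have same_fiber: "fiber X f y = fiber X f x"
    using y proj_f_subset_fiber by (fastforce simp: fiber_def)
  have same_class: "proj_f X f y = proj_f X f x"
    using y by (rule proj_f_eq_of_mem)
  obtain U where "nbhd_in X U y" and U: "LFC X f U"
    using assms y_top unfolding locally_fiber_connected_def by blast
  then obtain V where V: "openin X V" "y \<in> V" "V \<subseteq> U"
    unfolding nbhd_in_def by blast
  have "V \<inter> fiber X f x \<subseteq> proj_f X f x"
  proof
    fix z assume z: "z \<in> V \<inter> fiber X f x"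
    let ?F = "subtopology X (fiber X f y)"
    have top_F: "topspace ?F = fiber X f y"
      by (rule topspace_subtopology_subset[OF fiber_subset_topspace])
    have y_F: "y \<in> topspace ?F"
      using y_top by (simp add: fiber_def)
    have z_F: "z \<in> topspace ?F"
      using z same_fiber top_F by blast
    from y_F z_F have components: "connected_component_of_set ?F y \<in> connected_components_of ?F"
        "connected_component_of_set ?F z \<in> connected_components_of ?F"
      unfolding connected_components_of_def by simp_all
    have y_in: "y \<in> U \<inter> connected_component_of_set ?F y"
      using V y_F by (simp add: connected_component_of_refl subset_iff)
    have z_in: "z \<in> U \<inter> connected_component_of_set ?F z"
      using V z z_F by (auto simp add: connected_component_of_refl)
    have "connected_component_of_set ?F y = connected_component_of_set ?F z"
      using U V components y_in z_in unfolding LFC_def by blast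
    with z_in have "z \<in> proj_f X f y"
      unfolding proj_f_eq_connected_component by simp
    then show "z \<in> proj_f X f x"
      using same_class by simp
  qed
  moreover have "openin (subtopology X (fiber X f x)) (V \<inter> fiber X f x)"
    using V(1) openin_subtopology by blast
  moreover have "y \<in> V \<inter> fiber X f x"
    using V y proj_f_subset_fiber by fast
  ultimately show "\<exists>W. openin (subtopology X (fiber X f x)) W \<and> y \<in> W \<and> W \<subseteq> proj_f X f x"
    by blast
qed

lemma closedin_fiber_diff_proj_f:
  assumes "continuous_map X T f" and "t1_space T" and "locally_fiber_connected X f"
    and "x \<in> topspace X"
  shows "closedin X (fiber X f x - proj_f X f x)"
proof -
  let ?F = "subtopology X (fiber X f x)"
  have "closedin ?F (topspace ?F - proj_f X f x)"
    by (rule closedin_diff[OF closedin_topspace openin_proj_f_in_fiber[OF assms(3)]])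
  then have "closedin ?F (fiber X f x - proj_f X f x)"
    by (simp only: topspace_subtopology_subset[OF fiber_subset_topspace])
  then show ?thesis
    using closedin_closed_subtopology[OF closedin_fiber[OF assms(1,2,4)]] by blast
qed

lemma proj_f_nbhd_avoiding_closed:
  assumes normal: "normal_space X" and cont: "continuous_map X T f" and clo: "closed_map X T f"
    and t1: "t1_space T" and lfc: "locally_fiber_connected X f"
    and A: "closedin X A" and x: "x \<in> topspace X" and disj: "proj_f X f x \<inter> A = {}"
  obtains G where "openin X G" and "x \<in> G" and "\<And>y. y \<in> G \<Longrightarrow> proj_f X f y \<inter> A = {}"
proof -
  let ?F = "fiber X f x" and ?K = "proj_f X f x"
  have "closedin X (A \<union> (?F - ?K))"
    using A closedin_fiber_diff_proj_f[OF cont t1 lfc x] by blast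
  moreover have "disjnt ?K (A \<union> (?F - ?K))"
    using disj by (auto simp: disjnt_def)
  ultimately obtain U W where U: "openin X U" "?K \<subseteq> U" and W: "openin X W" "A \<union> (?F - ?K) \<subseteq> W"
    and "disjnt U W"
    using normal closedin_proj_f[OF cont t1 x] unfolding normal_space_def by meson
  have "{y \<in> topspace X. f y = f x} \<subseteq> U \<union> W"
    using U W by (auto simp: fiber_def)
  moreover have "f x \<in> topspace T"
    using cont x by (auto simp: continuous_map_def Pi_iff)
  ultimately obtain N where N: "openin T N" "f x \<in> N" and tube: "{y \<in> topspace X. f y \<in> N} \<subseteq> U \<union> W"
    using clo U(1) W(1) unfolding closed_map_fibre_neighbourhood by (meson openin_Un)
  show thesis
  proof
    show "openin X (U \<inter> {y \<in> topspace X. f y \<in> N})"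
      using U(1) openin_continuous_map_preimage[OF cont N(1)] by blast
    show "x \<in> U \<inter> {y \<in> topspace X. f y \<in> N}"
      using x N(2) U(2) mem_proj_f_self[OF x] by blast
  next
    fix y assume y: "y \<in> U \<inter> {y \<in> topspace X. f y \<in> N}"
    have "proj_f X f y \<subseteq> {z \<in> topspace X. f z \<in> N}"
      using y proj_f_subset_fiber by (fastforce simp: fiber_def)
    then have "proj_f X f y \<subseteq> U \<or> proj_f X f y \<subseteq> W"
      using tube U(1) W(1) \<open>disjnt U W\<close>
      by (meson connectedin_proj_f connectedin_subset_separated_union separatedin_open_sets subset_trans)
    moreover have "y \<in> proj_f X f y \<inter> U"
      using y mem_proj_f_self[of y X f] by blast
    ultimately have "proj_f X f y \<subseteq> U"
      using \<open>disjnt U W\<close> by (auto simp: disjnt_def)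
    then show "proj_f X f y \<inter> A = {}"
      using W(2) \<open>disjnt U W\<close> by (auto simp: disjnt_def)
  qed
qed

lemma closedin_proj_f_saturation:
  assumes "normal_space X" and "continuous_map X T f" and "closed_map X T f"
    and "t1_space T" and "locally_fiber_connected X f" and A: "closedin X A"
  shows "closedin X {x \<in> topspace X. proj_f X f x \<in> proj_f X f ` A}"
proof -
  have "openin X {x \<in> topspace X. proj_f X f x \<notin> proj_f X f ` A}"
  proof (subst openin_subopen, intro ballI)
    fix x assume x: "x \<in> {x \<in> topspace X. proj_f X f x \<notin> proj_f X f ` A}"
    have x_top: "x \<in> topspace X"
      using x by blast
    have "proj_f X f x \<inter> A = {}"
    proof (rule ccontr)
      assume "proj_f X f x \<inter> A \<noteq> {}"
      then obtain a where a: "a \<in> proj_f X f x" "a \<in> A"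
        by blast
      have "proj_f X f x \<in> proj_f X f ` A"
        using imageI[OF a(2), of "proj_f X f"] proj_f_eq_of_mem[OF a(1)] by simp
      then show False
        using x by blast
    qed
    then obtain G where G: "openin X G" "x \<in> G" and avoid: "\<And>y. y \<in> G \<Longrightarrow> proj_f X f y \<inter> A = {}"
      by (rule proj_f_nbhd_avoiding_closed[OF assms x_top]) blast
    have "G \<subseteq> {x \<in> topspace X. proj_f X f x \<notin> proj_f X f ` A}"
    proof
      fix y assume y: "y \<in> G"
      have "proj_f X f y \<notin> proj_f X f ` A"
      proof
        assume "proj_f X f y \<in> proj_f X f ` A"
        then obtain a where a: "a \<in> A" "proj_f X f y = proj_f X f a"
          by blast
        then have "a \<in> proj_f X f y \<inter> A"
          using mem_proj_f_self[of a X f] closedin_subset[OF A] by auto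
        with avoid[OF y] show False
          by blast
      qed
      with y openin_subset[OF G(1)] show "y \<in> {x \<in> topspace X. proj_f X f x \<notin> proj_f X f ` A}"
        by blast
    qed
    with G show "\<exists>G. openin X G \<and> x \<in> G \<and> G \<subseteq> {x \<in> topspace X. proj_f X f x \<notin> proj_f X f ` A}"
      by blast
  qed
  moreover have "topspace X - {x \<in> topspace X. proj_f X f x \<in> proj_f X f ` A} =
      {x \<in> topspace X. proj_f X f x \<notin> proj_f X f ` A}"
    by blast
  ultimately have "openin X (topspace X - {x \<in> topspace X. proj_f X f x \<in> proj_f X f ` A})"
    by simp
  then show ?thesis
    unfolding closedin_def by blast
qed

lemma closed_map_proj_f:
  assumes "normal_space X" and "continuous_map X T f" and "closed_map X T f"
    and "t1_space T" and "locally_fiber_connected X f"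
  shows "closed_map X (quot_f X f) (proj_f X f)"
  unfolding closed_map_def
proof (intro allI impI)
  fix A assume A: "closedin X A"
  have "\<forall>U. U \<subseteq> topspace (quot_f X f) \<longrightarrow>
      (closedin X {x \<in> topspace X. proj_f X f x \<in> U} \<longleftrightarrow> closedin (quot_f X f) U)"
    using quotient_map_proj_f[unfolded quotient_map_closedin] by (rule conjunct2)
  moreover have "proj_f X f ` A \<subseteq> topspace (quot_f X f)"
    unfolding quotient_imp_surjective_map[OF quotient_map_proj_f, symmetric]
    using closedin_subset[OF A] by (rule image_mono)
  moreover have "closedin X {x \<in> topspace X. proj_f X f x \<in> proj_f X f ` A}"
    by (rule closedin_proj_f_saturation[OF assms A])
  ultimately show "closedin (quot_f X f) (proj_f X f ` A)"
    by blast
qed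

lemma Hausdorff_space_quot_f:
  assumes "normal_space X" and "Hausdorff_space X" and "continuous_map X T f"
    and "closed_map X T f" and "t1_space T" and "locally_fiber_connected X f"
  shows "Hausdorff_space (quot_f X f)"
  using normal_Hausdorff_space_closed_continuous_map_image[OF assms(1,2)
      closed_map_proj_f[OF assms(1,3-6)] quotient_imp_continuous_map[OF quotient_map_proj_f]
      quotient_imp_surjective_map[OF quotient_map_proj_f]]
  by (rule conjunct2)

theorem lemma2p20:
  fixes X :: "'a topology" and T :: "'v::real_vector topology" and f :: "'a \<Rightarrow> 'v"
  assumes "connected_space X" and "locally_connected_space X" and "Hausdorff_space X"
    and "normal_space X" and "first_countable X"
    and "locally_convex_tvs T"
    and "continuous_map X T f" and "closed_map X T f"
    and "local_convexity_data X T f" and "locally_fiber_connected X f"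
  shows "closed_map X (quot_f X f) (proj_f X f) \<and> Hausdorff_space (quot_f X f)"
proof -
  have "Hausdorff_space T"
    using assms(6) unfolding locally_convex_tvs_def by blast
  then have t1: "t1_space T"
    by (rule Hausdorff_imp_t1_space)
  show ?thesis
    using closed_map_proj_f[OF assms(4,7,8) t1 assms(10)]
      Hausdorff_space_quot_f[OF assms(4,3,7,8) t1 assms(10)]
    by (rule conjI)
qed

end
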